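(* Let $n\ge p\ge1$, $\lambda>0$, $0<\varepsilon<\frac34$, and let $f:\mathbb{R}^{n\times p}\to\mathbb{R}$ be twice continuously differentiable. Let $\mathrm{St}(p,n)^\varepsilon=\{X:\|X^\top X-I_p\|\le\varepsilon\}$; let $L$, $L'$, $\hat L$, $s$, $\mu$, $\nu$, $\mathcal{L}$ be as described in the context; let $L_g>0$ be such that $\nabla\mathcal{L}$ is $L_g$-Lipschitz on $\mathrm{St}(p,n)^\varepsilon$, and let $\mathcal{L}^*$ be a lower bound of $\mathcal{L}$ on $\mathrm{St}(p,n)^\varepsilon$. Let $\tilde a=\sup_{X\in\mathrm{St}(p,n)^\varepsilon}\|\mathrm{skew}(\nabla f(X)X^\top)X\|$ and $\eta^*=\eta^*(\tilde a,\varepsilon,\lambda)$. Let $X_0\in\mathrm{St}(p,n)^\varepsilon$ and $X_{k+1}=X_k-\eta\Lambda(X_k)$ with $\eta\le\min\left(\frac1{2L_g},\frac{\nu}{4\lambda^2L_g(1+\varepsilon)},\eta^*\right)$. Then for every $K\ge1$, $$\frac1K\sum_{k=1}^K\|\mathrm{grad}f(X_k)\|^2\le\frac{4(\mathcal{L}(X_0)-\mathcal{L}^* )}{\eta K}\quad\text{and}\quad\frac1K\sum_{k=1}^K\mathcal{N}(X_k)\le\frac{2(\mathcal{L}(X_0)-\mathcal{L}^* )}{\eta\nu K}.$$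
   Context: $\|\cdot\|$, $\langle\cdot,\cdot\rangle$: Frobenius norm and inner product; $\mathrm{sym}(M)=\frac12(M+M^\top)$, $\mathrm{skew}(M)=\frac12(M-M^\top)$; $\mathcal{N}(X)=\frac14\|X^\top X-I_p\|^2$; $\mathrm{grad}f(X)=\mathrm{skew}(\nabla f(X)X^\top)X$; $\Lambda(X)=\mathrm{grad}f(X)+\lambda X(X^\top X-I_p)$. $L>0$ is such that $\nabla f$ is $L$-Lipschitz on $\mathrm{St}(p,n)^\varepsilon$, $L'=\max_{\mathrm{St}(p,n)^\varepsilon}\|\nabla f\|$, $\hat L=\max(L,L')$, $s=\sup_{X\in\mathrm{St}(p,n)^\varepsilon}\|\mathrm{sym}(X^\top\nabla f(X))\|$, $\mu\ge\frac{2}{3-4\varepsilon}\big(L(1-\varepsilon)+3s+\hat L^2\frac{(1+\varepsilon)^2}{\lambda(1-\varepsilon)}\big)$, $\nu=\lambda\mu$, and $\mathcal{L}(X)=f(X)-\frac12\langle\mathrm{sym}(X^\top\nabla f(X)),X^\top X-I_p\rangle+\mu\mathcal{N}(X)$. The safeguard step is $\eta^*(\tilde a,\varepsilon,\lambda)=\min\{Q,\frac1{2\lambda}\}$ with $Q=\inf_{a\in(0,\tilde a],d\in(0,\varepsilon]}\frac{\lambda(1-\varepsilon)d+a\sqrt{(\varepsilon-d)/2}}{a^2+\lambda^2(1+\varepsilon)d^2}$. *)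

theory Defs
  imports "HOL-Analysis.Analysis"
begin

text \<open>Matrices in R^(n x p) are rendered as real^'p^'n (n rows, p columns).
  The inner product and norm on this type are the Frobenius ones.\<close>

definition msym :: "real^'m^'m \<Rightarrow> real^'m^'m" where
  "msym M = (1/2) *\<^sub>R (M + transpose M)"

definition mskew :: "real^'m^'m \<Rightarrow> real^'m^'m" where
  "mskew M = (1/2) *\<^sub>R (M - transpose M)"

definition StEps :: "real \<Rightarrow> (real^'p^'n) set" where
  "StEps \<epsilon> = {X. norm (transpose X ** X - mat 1) \<le> \<epsilon>}"

definition Ncons :: "real^'p^'n \<Rightarrow> real" where
  "Ncons X = (1/4) * (norm (transpose X ** X - mat 1))^2"

text \<open>Riemannian gradient, given the Euclidean gradient G = \<nabla>f.\<close>
definition rgrad :: "(real^'p^'n \<Rightarrow> real^'p^'n) \<Rightarrow> real^'p^'n \<Rightarrow> real^'p^'n" where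
  "rgrad G X = mskew (G X ** transpose X) ** X"

definition Lambda_field :: "(real^'p^'n \<Rightarrow> real^'p^'n) \<Rightarrow> real \<Rightarrow> real^'p^'n \<Rightarrow> real^'p^'n" where
  "Lambda_field G lam X = rgrad G X + lam *\<^sub>R (X ** (transpose X ** X - mat 1))"

definition merit :: "(real^'p^'n \<Rightarrow> real) \<Rightarrow> (real^'p^'n \<Rightarrow> real^'p^'n) \<Rightarrow> real \<Rightarrow> real^'p^'n \<Rightarrow> real" where
  "merit f G \<mu> X = f X - (1/2) * (msym (transpose X ** G X) \<bullet> (transpose X ** X - mat 1))
                    + \<mu> * Ncons X"

text \<open>Safeguard step size. When the range (0, a~] is empty (a~ = 0), the infimum over
  the empty set is read as +infinity, so the min is 1/(2 lambda).\<close>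
definition eta_star :: "real \<Rightarrow> real \<Rightarrow> real \<Rightarrow> real" where
  "eta_star atil \<epsilon> lam =
     (if atil > 0 then
        min (Inf {(lam * (1 - \<epsilon>) * d + a * sqrt ((\<epsilon> - d) / 2)) / (a^2 + lam^2 * (1 + \<epsilon>) * d^2)
                 | a d. 0 < a \<and> a \<le> atil \<and> 0 < d \<and> d \<le> \<epsilon>})
            (1 / (2 * lam))
      else 1 / (2 * lam))"

end

theory Submission
  imports Defs
begin

(* The landing field Lambda X = grad f X + lam * X (X^T X - I) is the sum of the tangential part
   skew(nabla f X^T) X and the normal part lam * X D, D = X^T X - I, and these two parts are
   Frobenius-orthogonal. Pairing Lambda with the gradient of the merit function, the two terms
   lam <sym(X^T nabla f), D> coming from f and from the constraint part cancel, and the remaining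
   cross terms are absorbed by the lower bound on mu (via AM-GM), so that
     <nabla merit X, Lambda X>  >=  1/2 |grad f X|^2 + lam * mu * N X   on St(p,n)^eps.
   The defect of X - t Lambda X equals (1 - 2 t lam) D - 2 t lam D^2 + t^2 Lambda^T Lambda, and the
   safeguard step eta* is exactly what keeps its norm below eps; so the whole segment stays in
   St(p,n)^eps, where the Lipschitz bounds hold. The descent lemma then gives
     merit X_(k+1)  <=  merit X_k - eta/4 |grad f X_k|^2 - eta lam mu/2 N X_k,
   and telescoping against the lower bound L* yields both averaged estimates. *)

section \<open>Frobenius geometry of matrices\<close>

lemma inner_matrix_eq_sum: "(M::real^'b^'a) \<bullet> N = (\<Sum>i\<in>UNIV. \<Sum>j\<in>UNIV. M$i$j * N$i$j)"
  by (simp add: inner_vec_def)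

lemma sum_reverse3:
  "(\<Sum>i\<in>A. \<Sum>j\<in>B. \<Sum>k\<in>C. f i j k) = (\<Sum>k\<in>C. \<Sum>j\<in>B. \<Sum>i\<in>A. (f i j k :: 'a::comm_monoid_add))"
proof -
  have "(\<Sum>i\<in>A. \<Sum>j\<in>B. \<Sum>k\<in>C. f i j k) = (\<Sum>i\<in>A. \<Sum>k\<in>C. \<Sum>j\<in>B. f i j k)"
    by (rule sum.cong[OF refl]) (rule sum.swap)
  also have "\<dots> = (\<Sum>k\<in>C. \<Sum>i\<in>A. \<Sum>j\<in>B. f i j k)"
    by (rule sum.swap)
  also have "\<dots> = (\<Sum>k\<in>C. \<Sum>j\<in>B. \<Sum>i\<in>A. f i j k)"
    by (rule sum.cong[OF refl]) (rule sum.swap)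
  finally show ?thesis .
qed

lemma inner_matrix_mult_left:
  fixes A :: "real^'k^'m" and B :: "real^'n^'k" and C :: "real^'n^'m"
  shows "(A ** B) \<bullet> C = B \<bullet> (transpose A ** C)"
proof -
  have "(A ** B) \<bullet> C = (\<Sum>i\<in>UNIV. \<Sum>j\<in>UNIV. \<Sum>k\<in>UNIV. A$i$k * B$k$j * C$i$j)"
    by (simp add: inner_matrix_eq_sum matrix_matrix_mult_def sum_distrib_right)
  also have "\<dots> = (\<Sum>k\<in>UNIV. \<Sum>j\<in>UNIV. \<Sum>i\<in>UNIV. A$i$k * B$k$j * C$i$j)"
    by (rule sum_reverse3)
  also have "\<dots> = B \<bullet> (transpose A ** C)"
    by (simp add: inner_matrix_eq_sum matrix_matrix_mult_def transpose_def sum_distrib_left mult_ac)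
  finally show ?thesis .
qed

lemma power2_norm_matrix: "(norm (M::real^'b^'a))\<^sup>2 = (\<Sum>i\<in>UNIV. \<Sum>j\<in>UNIV. (M$i$j)\<^sup>2)"
  by (simp only: power2_norm_eq_inner inner_matrix_eq_sum) (simp add: power2_eq_square)

lemma inner_transpose: "transpose (A::real^'b^'a) \<bullet> transpose B = A \<bullet> B"
  unfolding inner_matrix_eq_sum transpose_def by (simp, subst sum.swap, simp)

lemma norm_transpose: "norm (transpose (A::real^'b^'a)) = norm A"
  by (simp add: norm_eq_sqrt_inner inner_transpose)

lemma inner_matrix_mult_right:
  fixes A :: "real^'k^'m" and B :: "real^'n^'k" and C :: "real^'n^'m"
  shows "(A ** B) \<bullet> C = A \<bullet> (C ** transpose B)"
proof -
  have "(A ** B) \<bullet> C = transpose (A ** B) \<bullet> transpose C"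
    by (simp add: inner_transpose)
  also have "\<dots> = transpose A \<bullet> (B ** transpose C)"
    by (simp add: matrix_transpose_mul inner_matrix_mult_left)
  also have "\<dots> = A \<bullet> (C ** transpose B)"
    by (metis inner_transpose matrix_transpose_mul transpose_transpose)
  finally show ?thesis .
qed

lemma norm_matrix_mult_le:
  fixes A :: "real^'k^'m" and B :: "real^'n^'k"
  shows "norm (A ** B) \<le> norm A * norm B"
proof -
  have "(norm (A ** B))\<^sup>2 = (\<Sum>i\<in>UNIV. \<Sum>j\<in>UNIV. (\<Sum>k\<in>UNIV. A$i$k * B$k$j)\<^sup>2)"
    by (simp add: power2_norm_matrix matrix_matrix_mult_def)
  also have "\<dots> \<le> (\<Sum>i\<in>UNIV. \<Sum>j\<in>UNIV. (\<Sum>k\<in>UNIV. (A$i$k)\<^sup>2) * (\<Sum>k\<in>UNIV. (B$k$j)\<^sup>2))"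
    by (intro sum_mono Cauchy_Schwarz_ineq_sum)
  also have "\<dots> = (\<Sum>i\<in>UNIV. \<Sum>k\<in>UNIV. (A$i$k)\<^sup>2) * (\<Sum>k\<in>UNIV. \<Sum>j\<in>UNIV. (B$k$j)\<^sup>2)"
    by (subst sum.swap[of _ UNIV UNIV]) (rule sum_product[symmetric])
  also have "\<dots> = (norm A * norm B)\<^sup>2"
    by (simp only: power2_norm_matrix power_mult_distrib)
  finally show ?thesis
    by (simp add: power2_le_iff_abs_le)
qed

interpretation matrix_mult: bounded_bilinear "(**) :: real^'k^'m \<Rightarrow> real^'n^'k \<Rightarrow> real^'n^'m"
proof
  fix A A' :: "real^'k^'m" and B B' :: "real^'n^'k" and r :: real
  show "(A + A') ** B = A ** B + A' ** B"
    by (simp add: matrix_matrix_mult_def vec_eq_iff sum.distrib algebra_simps)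
  show "A ** (B + B') = A ** B + A ** B'"
    by (rule matrix_add_ldistrib)
  show "(r *\<^sub>R A) ** B = r *\<^sub>R (A ** B)"
    by (simp add: scalar_matrix_assoc)
  show "A ** (r *\<^sub>R B) = r *\<^sub>R (A ** B)"
    by (simp add: matrix_scalar_ac scalar_matrix_assoc)
next
  show "\<exists>K. \<forall>A B. norm (A ** B :: real^'n^'m) \<le> norm (A :: real^'k^'m) * norm (B :: real^'n^'k) * K"
    by (rule exI[of _ 1]) (simp add: norm_matrix_mult_le)
qed

lemma bounded_linear_transpose: "bounded_linear (transpose :: real^'b^'a \<Rightarrow> real^'a^'b)"
proof (rule bounded_linear_intro[of _ 1])
  show "transpose (A + B) = transpose A + transpose B" for A B :: "real^'b^'a"
    by (simp add: transpose_def vec_eq_iff)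
qed (simp_all add: transpose_scalar norm_transpose)

lemmas transpose_diff = linear_diff[OF bounded_linear_transpose[THEN bounded_linear.linear]]
lemmas transpose_add = linear_add[OF bounded_linear_transpose[THEN bounded_linear.linear]]
lemmas transpose_zero = linear_0[OF bounded_linear_transpose[THEN bounded_linear.linear]]
lemmas continuous_on_transpose [continuous_intros] =
  bounded_linear.continuous_on[OF bounded_linear_transpose]
lemmas has_derivative_transpose [derivative_intros] =
  bounded_linear.has_derivative[OF bounded_linear_transpose]

lemma bounded_linear_msym: "bounded_linear (msym :: real^'a^'a \<Rightarrow> real^'a^'a)"
  unfolding msym_def[abs_def]
  by (intro bounded_linear_intros bounded_linear_transpose[THEN bounded_linear_compose])

lemma bounded_linear_mskew: "bounded_linear (mskew :: real^'a^'a \<Rightarrow> real^'a^'a)"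
  unfolding mskew_def[abs_def]
  by (intro bounded_linear_intros bounded_linear_transpose[THEN bounded_linear_compose])

lemmas continuous_on_msym [continuous_intros] = bounded_linear.continuous_on[OF bounded_linear_msym]
lemmas continuous_on_mskew [continuous_intros] = bounded_linear.continuous_on[OF bounded_linear_mskew]
lemmas has_derivative_msym [derivative_intros] = bounded_linear.has_derivative[OF bounded_linear_msym]

lemma transpose_msym: "transpose (msym M) = msym (M::real^'a^'a)"
  by (simp add: msym_def transpose_add transpose_scalar add.commute)

lemma transpose_mskew: "transpose (mskew M) = - mskew (M::real^'a^'a)"
  by (simp add: mskew_def transpose_diff transpose_scalar algebra_simps)

lemma msym_add_mskew: "msym M + mskew M = (M::real^'a^'a)"
  by (simp add: msym_def mskew_def algebra_simps flip: scaleR_2)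

lemma inner_symmetric_skew:
  fixes S K :: "real^'a^'a"
  assumes "transpose S = S" "transpose K = - K"
  shows "S \<bullet> K = 0"
proof -
  have "S \<bullet> K = transpose S \<bullet> transpose K"
    by (simp add: inner_transpose)
  also have "\<dots> = - (S \<bullet> K)"
    using assms by simp
  finally show ?thesis
    by simp
qed

lemma inner_msym_symmetric:
  assumes "transpose S = S"
  shows "msym M \<bullet> S = (M::real^'a^'a) \<bullet> S"
  using inner_transpose[of M S] assms by (simp add: msym_def inner_add_left)

lemma inner_skew_mult_symmetric:
  fixes X :: "real^'p^'n" and K :: "real^'n^'n" and S :: "real^'p^'p"
  assumes "transpose K = - K" "transpose S = S"
  shows "(K ** X) \<bullet> (X ** S) = 0"
proof -
  have "(K ** X) \<bullet> (X ** S) = (X ** S ** transpose X) \<bullet> K"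
    by (simp add: inner_matrix_mult_right inner_commute)
  also have "\<dots> = 0"
    using assms by (intro inner_symmetric_skew) (simp_all add: matrix_transpose_mul matrix_mul_assoc)
  finally show ?thesis .
qed

lemma inner_mskew_mult:
  fixes X E :: "real^'p^'n"
  shows "E \<bullet> (mskew (E ** transpose X) ** X) = (norm (mskew (E ** transpose X)))\<^sup>2"
proof -
  have "E \<bullet> (mskew (E ** transpose X) ** X)
      = (msym (E ** transpose X) + mskew (E ** transpose X)) \<bullet> mskew (E ** transpose X)"
    by (simp add: inner_commute inner_matrix_mult_right msym_add_mskew)
  then show ?thesis
    using inner_symmetric_skew[OF transpose_msym transpose_mskew]
    by (simp add: inner_add_left power2_norm_eq_inner)
qed

lemma inner_mult_symmetric:
  fixes X E :: "real^'p^'n"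
  assumes "transpose M = M"
  shows "E \<bullet> (X ** M) = msym (transpose X ** E) \<bullet> M"
  by (metis assms inner_commute inner_matrix_mult_left inner_msym_symmetric)

section \<open>Matrices near the Stiefel manifold\<close>

lemma symmetric_Gram_defect:
  fixes X :: "real^'p^'n"
  assumes "transpose X ** X = D + mat 1"
  shows "transpose D = D"
proof -
  have "transpose D + mat 1 = transpose (transpose X ** X)"
    by (simp add: assms transpose_add)
  also have "\<dots> = transpose X ** X"
    by (simp only: matrix_transpose_mul transpose_transpose)
  finally show ?thesis
    by (simp add: assms)
qed

lemma norm_mult_Gram_defect_bounds:
  fixes X :: "real^'p^'n"
  assumes gram: "transpose X ** X = D + mat 1"
  shows "(1 - norm D) * (norm D)\<^sup>2 \<le> (norm (X ** D))\<^sup>2"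
    and "(norm (X ** D))\<^sup>2 \<le> (1 + norm D) * (norm D)\<^sup>2"
proof -
  have "(norm (X ** D))\<^sup>2 = D \<bullet> (transpose X ** X ** D)"
    by (simp add: power2_norm_eq_inner inner_matrix_mult_left matrix_mul_assoc)
  also have "\<dots> = (norm D)\<^sup>2 + D \<bullet> (D ** D)"
    by (simp add: gram matrix_mult.add_left inner_add_right power2_norm_eq_inner)
  finally have eq: "(norm (X ** D))\<^sup>2 = (norm D)\<^sup>2 + D \<bullet> (D ** D)" .
  have "\<bar>D \<bullet> (D ** D)\<bar> \<le> norm D * norm (D ** D)"
    by (rule Cauchy_Schwarz_ineq2)
  also have "\<dots> \<le> norm D * (norm D * norm D)"
    by (intro mult_left_mono norm_matrix_mult_le) auto
  finally have "\<bar>D \<bullet> (D ** D)\<bar> \<le> norm D * (norm D)\<^sup>2"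
    by (simp add: power2_eq_square)
  then show "(1 - norm D) * (norm D)\<^sup>2 \<le> (norm (X ** D))\<^sup>2"
    and "(norm (X ** D))\<^sup>2 \<le> (1 + norm D) * (norm D)\<^sup>2"
    unfolding eq by (auto simp: algebra_simps abs_le_iff)
qed

lemma norm_mult_left_Gram_le:
  fixes X :: "real^'p^'n" and M :: "real^'n^'m"
  assumes gram: "transpose X ** X = D + mat 1"
  shows "(norm (M ** X))\<^sup>2 \<le> (1 + norm D) * (norm M)\<^sup>2"
proof -
  define a where "a = norm (M ** X)"
  define b where "b = norm (M ** X ** transpose X)"
  have "a\<^sup>2 = M \<bullet> (M ** X ** transpose X)"
    by (simp add: a_def power2_norm_eq_inner inner_matrix_mult_right)
  also have "\<dots> \<le> norm M * b"
    unfolding b_def by (rule Cauchy_Schwarz_ineq2[THEN abs_le_D1])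
  finally have ab: "a\<^sup>2 \<le> norm M * b" .
  have "b\<^sup>2 = (M ** X) \<bullet> (M ** X ** (transpose X ** X))"
    by (simp add: b_def power2_norm_eq_inner inner_matrix_mult_right matrix_mul_assoc)
  also have "\<dots> = a\<^sup>2 + (M ** X) \<bullet> (M ** X ** D)"
    by (simp add: a_def gram matrix_add_ldistrib inner_add_right power2_norm_eq_inner)
  also have "\<dots> \<le> a\<^sup>2 + a * (a * norm D)"
    using Cauchy_Schwarz_ineq2[THEN abs_le_D1, of "M ** X" "M ** X ** D"]
      mult_left_mono[OF norm_matrix_mult_le[of "M ** X" D], of a]
    by (simp add: a_def)
  finally have "b\<^sup>2 \<le> (1 + norm D) * a\<^sup>2"
    by (simp add: algebra_simps power2_eq_square)
  have "a\<^sup>2 * a\<^sup>2 \<le> (norm M)\<^sup>2 * b\<^sup>2"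
    using ab by (metis a_def norm_ge_zero power_mono power_mult_distrib zero_le_power2 power2_eq_square)
  also have "\<dots> \<le> (norm M)\<^sup>2 * ((1 + norm D) * a\<^sup>2)"
    using \<open>b\<^sup>2 \<le> (1 + norm D) * a\<^sup>2\<close> by (rule mult_left_mono) simp
  finally have "a\<^sup>2 * a\<^sup>2 \<le> ((1 + norm D) * (norm M)\<^sup>2) * a\<^sup>2"
    by (simp add: mult_ac)
  moreover have "0 < a\<^sup>2" if "a \<noteq> 0"
    using that by simp
  ultimately have "a\<^sup>2 \<le> (1 + norm D) * (norm M)\<^sup>2" if "a \<noteq> 0"
    using that mult_right_le_imp_le by blast
  then show ?thesis
    unfolding a_def by fastforce
qed

lemma norm_skew_plus_normal_sq:
  fixes X :: "real^'p^'n" and K :: "real^'n^'n" and S :: "real^'p^'p"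
  assumes "transpose K = - K" "transpose S = S"
  shows "(norm (K ** X + c *\<^sub>R (X ** S)))\<^sup>2 = (norm (K ** X))\<^sup>2 + c\<^sup>2 * (norm (X ** S))\<^sup>2"
  using inner_skew_mult_symmetric[OF assms, of X] unfolding power2_norm_eq_inner
  by (simp add: inner_add_left inner_add_right inner_commute power2_eq_square)

lemma landing_field_symmetrized:
  fixes X :: "real^'p^'n" and K :: "real^'n^'n" and lam :: real
  assumes gram: "transpose X ** X = D + mat 1" and skew: "transpose K = - K"
  defines "V \<equiv> K ** X + lam *\<^sub>R (X ** D)"
  shows "transpose X ** V + transpose V ** X = (2 * lam) *\<^sub>R (D + D ** D)"
proof -
  have DT: "transpose D = D"
    by (rule symmetric_Gram_defect[OF gram])
  have "transpose X ** (K ** X) + transpose (K ** X) ** X = 0"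
    by (simp add: matrix_transpose_mul skew matrix_mul_assoc matrix_mult.minus_left matrix_mult.minus_right)
  moreover have "transpose X ** (X ** D) = D + D ** D"
    by (simp add: matrix_mul_assoc gram matrix_mult.add_left add.commute)
  moreover have "transpose (X ** D) ** X = D + D ** D"
    by (simp add: matrix_transpose_mul DT gram matrix_add_ldistrib add.commute flip: matrix_mul_assoc)
  ultimately have "transpose X ** V + transpose V ** X = lam *\<^sub>R ((D + D ** D) + (D + D ** D))"
    unfolding V_def
    by (simp add: matrix_add_ldistrib matrix_mult.add_left transpose_add transpose_scalar
        matrix_mult.scaleR_left matrix_mult.scaleR_right scaleR_add_right add_ac)
  also have "\<dots> = (2 * lam) *\<^sub>R (D + D ** D)"
    by (simp only: scaleR_add_right scaleR_2 add_ac flip: scaleR_scaleR)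
  finally show ?thesis .
qed

lemma Gram_defect_landing_step:
  fixes X :: "real^'p^'n" and K :: "real^'n^'n" and lam t :: real
  assumes gram: "transpose X ** X = D + mat 1" and skew: "transpose K = - K"
  defines "V \<equiv> K ** X + lam *\<^sub>R (X ** D)"
  shows "transpose (X - t *\<^sub>R V) ** (X - t *\<^sub>R V) - mat 1
           = (1 - 2 * t * lam) *\<^sub>R D - (2 * t * lam) *\<^sub>R (D ** D) + t\<^sup>2 *\<^sub>R (transpose V ** V)"
proof -
  have "transpose (X - t *\<^sub>R V) ** (X - t *\<^sub>R V) - mat 1
          = D - t *\<^sub>R (transpose X ** V + transpose V ** X) + t\<^sup>2 *\<^sub>R (transpose V ** V)"
    by (simp add: matrix_mult.diff_left matrix_mult.diff_right transpose_diff transpose_scalar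
        matrix_mult.scaleR_left matrix_mult.scaleR_right gram algebra_simps power2_eq_square)
  then show ?thesis
    unfolding V_def landing_field_symmetrized[OF gram skew] by (simp add: algebra_simps)
qed

section \<open>The safeguarded step stays near the manifold\<close>

definition safeguard_ratio :: "real \<Rightarrow> real \<Rightarrow> real \<Rightarrow> real \<Rightarrow> real" where
  "safeguard_ratio lam \<epsilon> a d =
     (lam * (1 - \<epsilon>) * d + a * sqrt ((\<epsilon> - d) / 2)) / (a\<^sup>2 + lam\<^sup>2 * (1 + \<epsilon>) * d\<^sup>2)"

lemma safeguard_ratio_quadratic_bound:
  assumes "0 < a" "0 \<le> d" "d \<le> \<epsilon>" "0 \<le> t" and t: "t \<le> safeguard_ratio lam \<epsilon> a d"
  shows "t\<^sup>2 * (a\<^sup>2 + lam\<^sup>2 * (1 + \<epsilon>) * d\<^sup>2) - 2 * t * (lam * (1 - \<epsilon>) * d) \<le> \<epsilon> - d"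
proof -
  define u where "u = lam * (1 - \<epsilon>) * d"
  define v where "v = a * sqrt ((\<epsilon> - d) / 2)"
  define B where "B = a\<^sup>2 + lam\<^sup>2 * (1 + \<epsilon>) * d\<^sup>2"
  have "0 < B"
    using assms by (simp add: B_def add_pos_nonneg)
  have "v\<^sup>2 = a\<^sup>2 * ((\<epsilon> - d) / 2)"
    using assms by (simp add: v_def power_mult_distrib)
  also have "\<dots> \<le> B * ((\<epsilon> - d) / 2)"
    using assms by (intro mult_right_mono) (auto simp: B_def)
  finally have v2: "v\<^sup>2 / B \<le> (\<epsilon> - d) / 2"
    using \<open>0 < B\<close> by (simp add: pos_divide_le_eq mult.commute)
  have tB: "t \<le> (u + v) / B"
    using t by (simp add: safeguard_ratio_def u_def v_def B_def)
  have "t\<^sup>2 * B - 2 * t * u \<le> t * (v - u)"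
    using mult_left_mono[OF tB[unfolded pos_le_divide_eq[OF \<open>0 < B\<close>]] \<open>0 \<le> t\<close>]
    by (simp add: power2_eq_square algebra_simps)
  also have "\<dots> \<le> \<epsilon> - d"
  proof (cases "v \<le> u")
    case True
    then have "t * (v - u) \<le> 0"
      using \<open>0 \<le> t\<close> by (simp add: mult_nonneg_nonpos)
    then show ?thesis
      using assms by linarith
  next
    case False
    then have "t * (v - u) \<le> (u + v) / B * (v - u)"
      using tB by (intro mult_right_mono) auto
    also have "\<dots> \<le> v\<^sup>2 / B"
      using \<open>0 < B\<close> by (simp add: divide_right_mono power2_eq_square algebra_simps flip: add_divide_distrib)
    also have "\<dots> \<le> (\<epsilon> - d) / 2"
      by (rule v2)
    also have "\<dots> \<le> \<epsilon> - d"
      using \<open>d \<le> \<epsilon>\<close> by simp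
    finally show ?thesis .
  qed
  finally show ?thesis
    by (simp add: u_def B_def)
qed

lemma norm_diff_add_le: "norm (x - y + z) \<le> norm x + norm y + norm (z :: 'a::real_normed_vector)"
  using norm_triangle_ineq[of "x - y" z] norm_triangle_ineq4[of x y] by linarith

(* Without a tangential part the exact cubic expansion of the new defect is needed: bounding the
   last term by the norm of V^T V alone fails for eps close to 3/4. *)
lemma norm_Gram_defect_normal_step_le:
  fixes X :: "real^'p^'n" and lam t \<epsilon> :: real
  assumes gram: "transpose X ** X = D + mat 1"
    and D: "norm D \<le> \<epsilon>" and "\<epsilon> < 1" and s: "0 \<le> t * lam" "t * lam \<le> 1/2"
  defines "V \<equiv> lam *\<^sub>R (X ** D)"
  shows "norm (transpose (X - t *\<^sub>R V) ** (X - t *\<^sub>R V) - mat 1) \<le> \<epsilon>"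
proof -
  define s d where "s = t * lam" and "d = norm D"
  have "s * s \<le> s * 1"
    using s by (intro mult_left_mono) (auto simp: s_def)
  then have s2: "s\<^sup>2 \<le> 2 * s"
    using s by (simp add: s_def power2_eq_square)
  have DD: "norm (D ** D) \<le> d\<^sup>2" and DDD: "norm (D ** D ** D) \<le> d ^ 3"
    using norm_matrix_mult_le[of D D] order_trans[OF norm_matrix_mult_le mult_right_mono[OF norm_matrix_mult_le]]
    by (simp_all add: d_def power2_eq_square power3_eq_cube)
  have "transpose (X ** D) ** (X ** D) = D ** D ** D + D ** D"
    by (simp add: matrix_transpose_mul symmetric_Gram_defect[OF gram] matrix_mul_assoc gram
        matrix_add_ldistrib matrix_mult.add_left flip: matrix_mul_assoc[of D "transpose X"])
  then have "transpose V ** V = lam\<^sup>2 *\<^sub>R (D ** D ** D + D ** D)"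
    by (simp add: V_def transpose_scalar matrix_mult.scaleR_left matrix_mult.scaleR_right power2_eq_square)
  then have "transpose (X - t *\<^sub>R V) ** (X - t *\<^sub>R V) - mat 1
      = (1 - 2 * s) *\<^sub>R D - (2 * s - s\<^sup>2) *\<^sub>R (D ** D) + s\<^sup>2 *\<^sub>R (D ** D ** D)"
    using Gram_defect_landing_step[OF gram, where K = 0 and lam = lam and t = t]
    by (simp add: V_def s_def mult.assoc transpose_zero scaleR_add_right scaleR_diff_left power_mult_distrib)
  also have "norm \<dots> \<le> (1 - 2 * s) * d + (2 * s - s\<^sup>2) * d\<^sup>2 + s\<^sup>2 * d ^ 3"
    using s s2 DD DDD
    by (intro order_trans[OF norm_diff_add_le] add_mono) (auto simp: s_def d_def intro!: mult_left_mono)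
  also have "\<dots> \<le> (1 - 2 * s) * d + (2 * s - s\<^sup>2) * d + s\<^sup>2 * d"
  proof -
    have "d\<^sup>2 \<le> d" "d ^ 3 \<le> d"
      using power_decreasing[of 1 _ d] D \<open>\<epsilon> < 1\<close> by (simp_all add: d_def)
    then show ?thesis
      using s2 by (intro add_mono order_refl mult_left_mono) simp_all
  qed
  also have "\<dots> \<le> \<epsilon>"
    using D by (simp add: d_def algebra_simps)
  finally show ?thesis .
qed

lemma norm_Gram_defect_landing_step_le:
  fixes X :: "real^'p^'n" and K :: "real^'n^'n" and lam t \<epsilon> :: real
  assumes gram: "transpose X ** X = D + mat 1" and skew: "transpose K = - K"
    and D: "norm D \<le> \<epsilon>" and "\<epsilon> < 1" and "0 < lam" "0 \<le> t" "t * lam \<le> 1/2"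
    and safeguard: "K ** X \<noteq> 0 \<Longrightarrow> t \<le> safeguard_ratio lam \<epsilon> (norm (K ** X)) (norm D)"
  defines "V \<equiv> K ** X + lam *\<^sub>R (X ** D)"
  shows "norm (transpose (X - t *\<^sub>R V) ** (X - t *\<^sub>R V) - mat 1) \<le> \<epsilon>"
proof (cases "K ** X = 0")
  case True
  then show ?thesis
    using norm_Gram_defect_normal_step_le[OF gram D] assms by (simp add: V_def)
next
  case False
  define s a d where "s = t * lam" and "a = norm (K ** X)" and "d = norm D"
  have "(norm V)\<^sup>2 = a\<^sup>2 + lam\<^sup>2 * (norm (X ** D))\<^sup>2"
    unfolding V_def a_def by (rule norm_skew_plus_normal_sq[OF skew symmetric_Gram_defect[OF gram]])
  also have "\<dots> \<le> a\<^sup>2 + lam\<^sup>2 * ((1 + \<epsilon>) * d\<^sup>2)"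
    using norm_mult_Gram_defect_bounds(2)[OF gram] mult_right_mono[OF add_left_mono[OF D], of "d\<^sup>2" 1]
    by (intro add_left_mono mult_left_mono) (auto simp: d_def)
  finally have V: "norm (transpose V ** V) \<le> a\<^sup>2 + lam\<^sup>2 * (1 + \<epsilon>) * d\<^sup>2"
    using norm_matrix_mult_le[of "transpose V" V] by (simp add: norm_transpose power2_eq_square mult_ac)
  have "transpose (X - t *\<^sub>R V) ** (X - t *\<^sub>R V) - mat 1
      = (1 - 2 * s) *\<^sub>R D - (2 * s) *\<^sub>R (D ** D) + t\<^sup>2 *\<^sub>R (transpose V ** V)"
    using Gram_defect_landing_step[OF gram skew, where lam = lam and t = t] by (simp add: V_def s_def mult.assoc)
  also have "norm \<dots> \<le> (1 - 2 * s) * d + 2 * s * d\<^sup>2 + t\<^sup>2 * (a\<^sup>2 + lam\<^sup>2 * (1 + \<epsilon>) * d\<^sup>2)"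
    using assms V norm_matrix_mult_le[of D D]
    by (intro order_trans[OF norm_diff_add_le] add_mono)
      (auto simp: s_def d_def power2_eq_square intro!: mult_left_mono)
  also have "\<dots> \<le> \<epsilon>"
  proof -
    have "t\<^sup>2 * (a\<^sup>2 + lam\<^sup>2 * (1 + \<epsilon>) * d\<^sup>2) - 2 * t * (lam * (1 - \<epsilon>) * d) \<le> \<epsilon> - d"
      using safeguard False D assms
      by (intro safeguard_ratio_quadratic_bound) (auto simp: a_def d_def)
    moreover have "2 * s * d\<^sup>2 \<le> 2 * s * (\<epsilon> * d)"
      using assms D by (intro mult_left_mono) (auto simp: s_def d_def power2_eq_square mult_right_mono)
    ultimately show ?thesis
      by (simp add: s_def algebra_simps)
  qed
  finally show ?thesis .
qed

lemma eta_star_le_inverse: "eta_star atil \<epsilon> lam \<le> 1 / (2 * lam)"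
  unfolding eta_star_def by auto

lemma eta_star_le_safeguard_ratio:
  assumes a: "0 < a" "a \<le> atil" and d: "0 \<le> d" "d \<le> \<epsilon>" and "0 < \<epsilon>" "\<epsilon> < 1" "0 \<le> lam"
  shows "eta_star atil \<epsilon> lam \<le> safeguard_ratio lam \<epsilon> a d"
proof -
  define Q where "Q = {safeguard_ratio lam \<epsilon> a' d' | a' d'. 0 < a' \<and> a' \<le> atil \<and> 0 < d' \<and> d' \<le> \<epsilon>}"
  have "eta_star atil \<epsilon> lam \<le> Inf Q"
    using a by (simp add: eta_star_def Q_def safeguard_ratio_def)
  moreover have "bdd_below Q"
    using assms unfolding Q_def safeguard_ratio_def by (intro bdd_belowI[of _ 0]) auto
  ultimately have pos: "eta_star atil \<epsilon> lam \<le> safeguard_ratio lam \<epsilon> a d'" if "0 < d'" "d' \<le> \<epsilon>" for d'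
  proof -
    have "safeguard_ratio lam \<epsilon> a d' \<in> Q"
      using a that unfolding Q_def by blast
    with \<open>bdd_below Q\<close> have "Inf Q \<le> safeguard_ratio lam \<epsilon> a d'"
      by (simp add: cInf_lower)
    with \<open>eta_star atil \<epsilon> lam \<le> Inf Q\<close> show ?thesis
      by linarith
  qed
  \<comment> \<open>The infimum only ranges over d > 0; the case d = 0 follows by continuity in d.\<close>
  have "0 < a\<^sup>2 + lam\<^sup>2 * (1 + \<epsilon>) * x\<^sup>2" for x
    using a \<open>0 < \<epsilon>\<close> by (intro add_pos_nonneg) auto
  then have "continuous_on (closure {0<..\<epsilon>}) (safeguard_ratio lam \<epsilon> a)"
    unfolding safeguard_ratio_def[abs_def] by (intro continuous_intros) (auto simp: dual_order.strict_implies_not_eq)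
  then show ?thesis
    using continuous_ge_on_closure[of "{0<..\<epsilon>}" "safeguard_ratio lam \<epsilon> a" d] pos d \<open>0 < \<epsilon>\<close>
    by auto
qed

section \<open>The landing field is a descent direction for the merit function\<close>

lemma merit_has_derivative:
  fixes f :: "real^'p^'n \<Rightarrow> real" and G :: "real^'p^'n \<Rightarrow> real^'p^'n"
  assumes "(f has_derivative (\<lambda>H. G X \<bullet> H)) (at X)" and "(G has_derivative G') (at X)"
  shows "(merit f G \<mu> has_derivative (\<lambda>H. G X \<bullet> H
      - 1/2 * (msym (transpose H ** G X + transpose X ** G' H) \<bullet> (transpose X ** X - mat 1)
               + msym (transpose X ** G X) \<bullet> (transpose H ** X + transpose X ** H))
      + \<mu> * (1/2 * ((transpose X ** X - mat 1) \<bullet> (transpose H ** X + transpose X ** H))))) (at X)"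
proof -
  have merit_eq: "merit f G \<mu> = (\<lambda>Y. f Y - 1/2 * (msym (transpose Y ** G Y) \<bullet> (transpose Y ** Y - mat 1))
      + \<mu> * (1/4 * ((transpose Y ** Y - mat 1) \<bullet> (transpose Y ** Y - mat 1))))"
    by (simp add: fun_eq_iff merit_def Ncons_def power2_norm_eq_inner)
  show ?thesis
    unfolding merit_eq
    by (rule has_derivative_eq_rhs, (rule has_derivative_add has_derivative_diff has_derivative_mult
          has_derivative_inner matrix_mult.FDERIV has_derivative_transpose has_derivative_msym
          has_derivative_const has_derivative_ident assms)+)
      (simp add: fun_eq_iff inner_add_left inner_add_right inner_commute algebra_simps)
qed

lemma merit_derivative_landing_direction_eq:
  fixes X E V :: "real^'p^'n" and lam \<mu> :: real
  assumes gram: "transpose X ** X = D + mat 1"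
  defines "A \<equiv> mskew (E ** transpose X)" and "S \<equiv> msym (transpose X ** E)"
    and "\<Lambda> \<equiv> mskew (E ** transpose X) ** X + lam *\<^sub>R (X ** D)"
  shows "E \<bullet> \<Lambda> - 1/2 * (msym (transpose \<Lambda> ** E + transpose X ** V) \<bullet> D
             + S \<bullet> (transpose \<Lambda> ** X + transpose X ** \<Lambda>))
           + \<mu> * (1/2 * (D \<bullet> (transpose \<Lambda> ** X + transpose X ** \<Lambda>)))
         = (norm A)\<^sup>2 - 3/2 * lam * (S \<bullet> (D ** D)) - 1/2 * ((A ** X) \<bullet> (E ** D))
           - 1/2 * (V \<bullet> (X ** D)) + \<mu> * lam * (norm (X ** D))\<^sup>2"
proof -
  have DT: "transpose D = D" and DDT: "transpose (D ** D) = D ** D"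
    using symmetric_Gram_defect[OF gram] by (simp_all add: matrix_transpose_mul)
  have "(transpose \<Lambda> ** E) \<bullet> D = E \<bullet> (\<Lambda> ** D)"
    by (metis inner_matrix_mult_left transpose_transpose)
  also have "\<dots> = E \<bullet> (A ** X ** D) + lam * (E \<bullet> (X ** (D ** D)))"
    by (simp add: \<Lambda>_def A_def matrix_mult.add_left matrix_mult.scaleR_left inner_add_right
        matrix_mul_assoc)
  also have "E \<bullet> (A ** X ** D) = (A ** X) \<bullet> (E ** D)"
    by (metis DT inner_commute inner_matrix_mult_right)
  finally have "msym (transpose \<Lambda> ** E + transpose X ** V) \<bullet> D
      = (A ** X) \<bullet> (E ** D) + lam * (S \<bullet> (D ** D)) + V \<bullet> (X ** D)"
    using inner_mult_symmetric[OF DDT, of E X]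
    by (simp add: S_def inner_msym_symmetric[OF DT] inner_add_left inner_matrix_mult_left)
  moreover have "transpose \<Lambda> ** X + transpose X ** \<Lambda> = (2 * lam) *\<^sub>R (D + D ** D)"
    using landing_field_symmetrized[OF gram transpose_mskew[of "E ** transpose X"], where lam = lam]
    by (simp add: \<Lambda>_def add.commute)
  moreover have "D \<bullet> (D + D ** D) = (norm (X ** D))\<^sup>2"
    by (simp add: power2_norm_eq_inner inner_matrix_mult_left matrix_mul_assoc gram
        matrix_mult.add_left inner_add_right add.commute)
  ultimately show ?thesis
    using inner_mskew_mult[of E X] inner_mult_symmetric[OF DT, of E X]
    by (simp add: \<Lambda>_def A_def S_def inner_add_right algebra_simps) (simp flip: distrib_left)
qed

lemma two_mult_le_weighted_squares:
  fixes x y c :: real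
  assumes "0 < c"
  shows "2 * x * y \<le> c * x\<^sup>2 + y\<^sup>2 / c"
proof -
  have "c * (2 * x * y) \<le> c * (c * x\<^sup>2 + y\<^sup>2 / c)"
    using sum_squares_bound[of "c * x" y] assms
    by (simp add: distrib_left power_mult_distrib power2_eq_square mult_ac)
  then show ?thesis
    using assms by simp
qed

(* The weight (1 - eps) / (1 + eps) is chosen so that, together with
   norm (A X)^2 <= (1 + eps) norm A^2, exactly half of norm (A X)^2 survives in the final bound. *)
lemma landing_cross_term_bound:
  fixes a d w Lh \<epsilon> :: real
  assumes "0 < \<epsilon>" "\<epsilon> < 1" "0 \<le> a" "0 \<le> d" "0 \<le> Lh" and w: "w\<^sup>2 \<le> (1 + \<epsilon>) * d\<^sup>2"
  shows "Lh * a * (d + w) \<le> (1 - \<epsilon>) / (1 + \<epsilon>) * a\<^sup>2 + Lh\<^sup>2 * (1 + \<epsilon>)\<^sup>2 * d\<^sup>2 / (1 - \<epsilon>)"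
proof -
  define r where "r = sqrt (1 + \<epsilon>)"
  have r: "1 \<le> r" "r\<^sup>2 = 1 + \<epsilon>"
    using assms by (auto simp: r_def)
  have "w\<^sup>2 \<le> (r * d)\<^sup>2"
    using w r by (simp add: power_mult_distrib)
  then have "w \<le> r * d"
    by (rule power2_le_imp_le) (use r assms in simp)
  moreover have "d \<le> r * d"
    using r assms mult_right_mono[of 1 r d] by simp
  ultimately have "Lh * a * (d + w) \<le> Lh * a * (2 * (r * d))"
    using assms by (intro mult_left_mono) auto
  also have "\<dots> = 2 * a * (Lh * r * d)"
    by simp
  also have "\<dots> \<le> (1 - \<epsilon>) / (1 + \<epsilon>) * a\<^sup>2 + (Lh * r * d)\<^sup>2 / ((1 - \<epsilon>) / (1 + \<epsilon>))"
    using assms by (intro two_mult_le_weighted_squares) simp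
  also have "(Lh * r * d)\<^sup>2 / ((1 - \<epsilon>) / (1 + \<epsilon>)) = Lh\<^sup>2 * (1 + \<epsilon>)\<^sup>2 * d\<^sup>2 / (1 - \<epsilon>)"
    by (simp add: power_mult_distrib r(2) divide_divide_eq_right) (simp add: power2_eq_square mult_ac)
  finally show ?thesis .
qed

lemma landing_mu_consequences:
  fixes L Lh s lam \<mu> \<epsilon> :: real
  assumes eps: "0 < \<epsilon>" "\<epsilon> < 3/4" and "0 < lam" "0 < L" "0 \<le> s"
    and \<mu>: "2 / (3 - 4 * \<epsilon>) * (L * (1 - \<epsilon>) + 3 * s + Lh\<^sup>2 * (1 + \<epsilon>)\<^sup>2 / (lam * (1 - \<epsilon>))) \<le> \<mu>"
  defines "R \<equiv> Lh\<^sup>2 * (1 + \<epsilon>)\<^sup>2 / (lam * (1 - \<epsilon>))"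
  shows "L / 2 \<le> \<mu>" and "\<mu> / 4 \<le> (\<mu> - L / 2) * (1 - \<epsilon>) - 3/2 * s - R / 2"
proof -
  have "0 \<le> R"
    using assms by (simp add: R_def)
  have \<mu>': "2 * (L * (1 - \<epsilon>) + 3 * s + R) \<le> \<mu> * (3 - 4 * \<epsilon>)"
    using \<mu> eps by (simp add: R_def field_simps)
  then have "L / 2 * (3 - 4 * \<epsilon>) \<le> \<mu> * (3 - 4 * \<epsilon>)"
    using \<open>0 \<le> R\<close> \<open>0 \<le> s\<close> \<open>0 < L\<close> by (simp add: algebra_simps)
  then show "L / 2 \<le> \<mu>"
    using eps by simp
  have "(\<mu> - L / 2) * (1 - \<epsilon>) - 3/2 * s - R / 2 - \<mu> / 4
      = (\<mu> * (3 - 4 * \<epsilon>) - 2 * (L * (1 - \<epsilon>) + 3 * s + R)) / 4"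
    by (simp add: field_simps)
  also have "\<dots> \<ge> 0"
    using \<mu>' by simp
  finally show "\<mu> / 4 \<le> (\<mu> - L / 2) * (1 - \<epsilon>) - 3/2 * s - R / 2"
    by simp
qed

lemma landing_descent_scalar_bound:
  fixes \<alpha> a d w \<sigma> c1 c2 s L Lh lam \<mu> \<epsilon> :: real
  assumes eps: "0 < \<epsilon>" "\<epsilon> < 3/4" and "0 < lam" "0 < L" "L \<le> Lh" "0 \<le> s"
    and "0 \<le> a" "0 \<le> d" "0 \<le> w"
    and \<alpha>: "a\<^sup>2 \<le> (1 + \<epsilon>) * \<alpha>" and \<sigma>: "\<sigma> \<le> s * d\<^sup>2" and c1: "c1 \<le> Lh * a * d"
    and c2: "c2 \<le> L * (a + lam * w) * w"
    and w: "(1 - \<epsilon>) * d\<^sup>2 \<le> w\<^sup>2" "w\<^sup>2 \<le> (1 + \<epsilon>) * d\<^sup>2"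
    and \<mu>: "2 / (3 - 4 * \<epsilon>) * (L * (1 - \<epsilon>) + 3 * s + Lh\<^sup>2 * (1 + \<epsilon>)\<^sup>2 / (lam * (1 - \<epsilon>))) \<le> \<mu>"
  shows "a\<^sup>2 / 2 + lam * \<mu> * d\<^sup>2 / 4 \<le> \<alpha> - 3/2 * lam * \<sigma> - 1/2 * c1 - 1/2 * c2 + \<mu> * lam * w\<^sup>2"
proof -
  define R where "R = Lh\<^sup>2 * (1 + \<epsilon>)\<^sup>2 / (lam * (1 - \<epsilon>))"
  note \<mu>' = landing_mu_consequences[OF eps \<open>0 < lam\<close> \<open>0 < L\<close> \<open>0 \<le> s\<close> \<mu>, folded R_def]
  have \<alpha>': "a\<^sup>2 / (1 + \<epsilon>) \<le> \<alpha>"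
    using \<alpha> eps by (simp add: divide_le_eq mult.commute)
  have \<sigma>': "lam * \<sigma> \<le> lam * (s * d\<^sup>2)"
    using \<sigma> \<open>0 < lam\<close> by simp
  have c2': "c2 \<le> Lh * a * w + L * lam * w\<^sup>2"
    using c2 mult_right_mono[OF mult_right_mono[OF \<open>L \<le> Lh\<close> \<open>0 \<le> a\<close>] \<open>0 \<le> w\<close>]
    by (simp add: algebra_simps power2_eq_square)
  have cross: "Lh * a * (d + w) \<le> (1 - \<epsilon>) / (1 + \<epsilon>) * a\<^sup>2 + lam * R * d\<^sup>2"
    using landing_cross_term_bound[of \<epsilon> a d Lh w] assms \<open>0 < lam\<close> by (simp add: R_def)
  have normal: "(\<mu> - L / 2) * lam * ((1 - \<epsilon>) * d\<^sup>2) \<le> (\<mu> - L / 2) * lam * w\<^sup>2"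
    using w \<mu>'(1) \<open>0 < lam\<close> by (intro mult_left_mono) auto
  have "lam * d\<^sup>2 * (\<mu> / 4) \<le> lam * d\<^sup>2 * ((\<mu> - L / 2) * (1 - \<epsilon>) - 3/2 * s - R / 2)"
    using \<mu>'(2) \<open>0 < lam\<close> by (intro mult_left_mono) auto
  also have "\<dots> = (\<mu> - L / 2) * lam * ((1 - \<epsilon>) * d\<^sup>2) - 3/2 * (lam * (s * d\<^sup>2)) - 1/2 * (lam * R * d\<^sup>2)"
    by (simp add: field_simps)
  finally have d_terms: "lam * \<mu> * d\<^sup>2 / 4
      \<le> (\<mu> - L / 2) * lam * ((1 - \<epsilon>) * d\<^sup>2) - 3/2 * (lam * (s * d\<^sup>2)) - 1/2 * (lam * R * d\<^sup>2)"
    by (simp add: mult_ac)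
  have "1 / c - 1/2 * ((2 - c) / c) = 1/2" if "c \<noteq> 0" for c :: real
    using that by (simp add: field_simps)
  from this[of "1 + \<epsilon>"] eps have "1 / (1 + \<epsilon>) - 1/2 * ((1 - \<epsilon>) / (1 + \<epsilon>)) = 1/2"
    by simp
  then have a_terms: "a\<^sup>2 / (1 + \<epsilon>) - 1/2 * ((1 - \<epsilon>) / (1 + \<epsilon>) * a\<^sup>2) = a\<^sup>2 / 2"
    by (metis (no_types, lifting) left_diff_distrib mult.assoc times_divide_eq_left mult_1)
  have "(\<mu> - L / 2) * lam * w\<^sup>2 = \<mu> * lam * w\<^sup>2 - 1/2 * (L * lam * w\<^sup>2)"
    and "Lh * a * (d + w) = Lh * a * d + Lh * a * w"
    by (simp_all add: algebra_simps)
  then show ?thesis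
    using d_terms a_terms \<alpha>' \<sigma>' c1 c2' cross normal by linarith
qed

lemma landing_direction_terms_lower_bound:
  fixes X E V :: "real^'p^'n" and lam \<mu> \<epsilon> L Lp s :: real
  assumes gram: "transpose X ** X = D + mat 1" and D: "norm D \<le> \<epsilon>"
    and eps: "0 < \<epsilon>" "\<epsilon> < 3/4" and "0 < lam" "0 < L"
    and E: "norm E \<le> Lp" and S: "norm (msym (transpose X ** E)) \<le> s"
    and V: "norm V \<le> L * norm (mskew (E ** transpose X) ** X + lam *\<^sub>R (X ** D))"
    and \<mu>: "2 / (3 - 4 * \<epsilon>) * (L * (1 - \<epsilon>) + 3 * s + (max L Lp)\<^sup>2 * (1 + \<epsilon>)\<^sup>2 / (lam * (1 - \<epsilon>))) \<le> \<mu>"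
  defines "A \<equiv> mskew (E ** transpose X)"
  shows "(norm (A ** X))\<^sup>2 / 2 + lam * \<mu> * (norm D)\<^sup>2 / 4
    \<le> (norm A)\<^sup>2 - 3/2 * lam * (msym (transpose X ** E) \<bullet> (D ** D)) - 1/2 * ((A ** X) \<bullet> (E ** D))
       - 1/2 * (V \<bullet> (X ** D)) + \<mu> * lam * (norm (X ** D))\<^sup>2"
proof (rule landing_descent_scalar_bound[OF eps \<open>0 < lam\<close> \<open>0 < L\<close> max.cobounded1 _ _ _ _ _ _ _ _ _ _ \<mu>])
  define a d w where "a = norm (A ** X)" and "d = norm D" and "w = norm (X ** D)"
  have DD: "norm (D ** D) \<le> d\<^sup>2"
    using norm_matrix_mult_le[of D D] by (simp add: d_def power2_eq_square)
  show "0 \<le> s"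
    using S norm_ge_zero order_trans by blast
  show "(norm (A ** X))\<^sup>2 \<le> (1 + \<epsilon>) * (norm A)\<^sup>2"
    using norm_mult_left_Gram_le[OF gram, of A] D by (smt (verit) mult_right_mono zero_le_power2)
  show "msym (transpose X ** E) \<bullet> (D ** D) \<le> s * (norm D)\<^sup>2"
    using Cauchy_Schwarz_ineq2[THEN abs_le_D1, of "msym (transpose X ** E)" "D ** D"]
      mult_mono[OF S DD] \<open>0 \<le> s\<close> by (simp add: d_def)
  show "(A ** X) \<bullet> (E ** D) \<le> max L Lp * norm (A ** X) * norm D"
  proof -
    have "norm (E ** D) \<le> Lp * d"
      using norm_matrix_mult_le[of E D] mult_right_mono[OF E, of d] by (simp add: d_def)
    also have "\<dots> \<le> max L Lp * d"
      by (simp add: d_def mult_right_mono)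
    finally show ?thesis
      using Cauchy_Schwarz_ineq2[THEN abs_le_D1, of "A ** X" "E ** D"]
        mult_left_mono[of _ _ "norm (A ** X)"] by (fastforce simp: d_def mult_ac)
  qed
  show "V \<bullet> (X ** D) \<le> L * (norm (A ** X) + lam * norm (X ** D)) * norm (X ** D)"
  proof -
    have "norm V \<le> L * (a + lam * w)"
      using V norm_triangle_ineq[of "A ** X" "lam *\<^sub>R (X ** D)"] \<open>0 < lam\<close> \<open>0 < L\<close>
      by (auto simp: A_def a_def w_def intro: order_trans mult_left_mono)
    then show ?thesis
      using Cauchy_Schwarz_ineq2[THEN abs_le_D1, of V "X ** D"] mult_right_mono[of _ _ w]
      by (fastforce simp: a_def w_def)
  qed
  show "(1 - \<epsilon>) * (norm D)\<^sup>2 \<le> (norm (X ** D))\<^sup>2" "(norm (X ** D))\<^sup>2 \<le> (1 + \<epsilon>) * (norm D)\<^sup>2"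
    using norm_mult_Gram_defect_bounds[OF gram] D mult_right_mono[of _ _ "(norm D)\<^sup>2"]
    by (smt (verit) zero_le_power2)+
qed simp_all

section \<open>Derivative bounds along segments\<close>

lemma norm_derivative_le_of_segment_lipschitz:
  fixes G :: "'a::real_normed_vector \<Rightarrow> 'b::real_normed_vector"
  assumes G: "(G has_derivative G') (at x)" and "0 < \<delta>"
    and lip: "\<And>t. 0 < t \<Longrightarrow> t \<le> \<delta> \<Longrightarrow> norm (G (x + t *\<^sub>R v) - G x) \<le> L * (t * norm v)"
  shows "norm (G' v) \<le> L * norm v"
proof -
  let ?F = "at (0::real) within {0<..}"
  define \<phi> where "\<phi> t = G (x + t *\<^sub>R v)" for t :: real
  have lin: "linear G'"
    using G by (simp add: has_derivative_bounded_linear bounded_linear.linear)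
  have "(\<phi> has_derivative (\<lambda>t. G' (t *\<^sub>R v))) ?F"
    unfolding \<phi>_def using G
    by (auto intro!: derivative_eq_intros has_derivative_compose[of "\<lambda>t. x + t *\<^sub>R v" _ _ _ G G'])
  then have "((\<lambda>t. (\<phi> t - \<phi> 0 - t *\<^sub>R G' v) /\<^sub>R norm t) \<longlongrightarrow> 0) ?F"
    by (simp add: has_derivative_at_within linear_scale[OF lin])
  moreover have "\<forall>\<^sub>F t in ?F. (\<phi> t - \<phi> 0 - t *\<^sub>R G' v) /\<^sub>R norm t = (\<phi> t - \<phi> 0) /\<^sub>R t - G' v"
    by (auto simp: eventually_at_filter scaleR_diff_right)
  ultimately have "((\<lambda>t. (\<phi> t - \<phi> 0) /\<^sub>R t - G' v) \<longlongrightarrow> 0) ?F"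
    using Lim_transform_eventually by fastforce
  then have quotient: "((\<lambda>t. (\<phi> t - \<phi> 0) /\<^sub>R t) \<longlongrightarrow> G' v) ?F"
    by (simp add: Lim_null[symmetric])
  have "\<forall>\<^sub>F t in ?F. 0 < t \<and> t < \<delta>"
    using \<open>0 < \<delta>\<close> by (auto simp: eventually_at dist_real_def intro!: exI[of _ \<delta>])
  then have "\<forall>\<^sub>F t in ?F. norm ((\<phi> t - \<phi> 0) /\<^sub>R t) \<le> L * norm v"
  proof eventually_elim
    case (elim t)
    then have "norm (\<phi> t - \<phi> 0) \<le> L * norm v * t"
      using lip[of t] by (simp add: \<phi>_def mult_ac)
    moreover have "norm ((\<phi> t - \<phi> 0) /\<^sub>R t) = norm (\<phi> t - \<phi> 0) / t"
      using elim by (simp add: divide_inverse mult.commute)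
    ultimately show ?case
      using elim by (simp add: pos_divide_le_eq)
  qed
  then show ?thesis
    by (intro Lim_norm_ubound[OF _ quotient]) simp
qed

lemma descent_lemma:
  fixes M :: "'a::real_inner \<Rightarrow> real"
  assumes M: "\<And>y. (M has_derivative (\<lambda>h. g y \<bullet> h)) (at y)" and "0 \<le> \<eta>"
    and lip: "\<And>t. 0 \<le> t \<Longrightarrow> t \<le> \<eta> \<Longrightarrow> norm (g x - g (x - t *\<^sub>R v)) \<le> Lg * (t * norm v)"
  shows "M (x - \<eta> *\<^sub>R v) \<le> M x - \<eta> * (g x \<bullet> v) + Lg / 2 * \<eta>\<^sup>2 * (norm v)\<^sup>2"
proof -
  define h where "h t = M (x - t *\<^sub>R v) + t * (g x \<bullet> v) - Lg / 2 * t\<^sup>2 * (norm v)\<^sup>2" for t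
  have h': "(h has_real_derivative (g x - g (x - t *\<^sub>R v)) \<bullet> v - Lg * t * (norm v)\<^sup>2) (at t)" for t
    unfolding h_def has_field_derivative_def
    by (rule has_derivative_eq_rhs,
        (rule derivative_intros has_derivative_compose[of "\<lambda>t. x - t *\<^sub>R v" _ _ _ M] M)+)
      (auto simp: fun_eq_iff inner_diff_left algebra_simps power2_eq_square)
  have "h \<eta> \<le> h 0"
  proof (rule DERIV_nonpos_imp_nonincreasing[OF \<open>0 \<le> \<eta>\<close>])
    fix t assume t: "0 \<le> t" "t \<le> \<eta>"
    have "(g x - g (x - t *\<^sub>R v)) \<bullet> v \<le> Lg * (t * norm v) * norm v"
      using Cauchy_Schwarz_ineq2[THEN abs_le_D1] mult_right_mono[OF lip[OF t] norm_ge_zero]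
      by (rule order_trans)
    then have "(g x - g (x - t *\<^sub>R v)) \<bullet> v - Lg * t * (norm v)\<^sup>2 \<le> 0"
      by (simp add: power2_eq_square mult_ac)
    with h' show "\<exists>y. (h has_real_derivative y) (at t) \<and> y \<le> 0"
      by blast
  qed
  then show ?thesis
    by (simp add: h_def)
qed

section \<open>Compactness of the Stiefel neighbourhood\<close>

lemma bounded_StEps: "bounded (StEps \<epsilon> :: (real^'p^'n) set)"
proof -
  define I :: "real^'p^'p" where "I = mat 1"
  have "norm X \<le> sqrt (norm I * (norm I + \<bar>\<epsilon>\<bar>))" if "X \<in> StEps \<epsilon>" for X :: "real^'p^'n"
  proof (rule real_le_rsqrt)
    have "norm (transpose X ** X) \<le> norm I + \<bar>\<epsilon>\<bar>"
      using that norm_triangle_ineq[of "transpose X ** X - I" I] by (auto simp: StEps_def I_def)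
    moreover have "(norm X)\<^sup>2 = I \<bullet> (transpose X ** X)"
      by (metis I_def inner_matrix_mult_left matrix_mul_rid power2_norm_eq_inner)
    ultimately show "(norm X)\<^sup>2 \<le> norm I * (norm I + \<bar>\<epsilon>\<bar>)"
      using Cauchy_Schwarz_ineq2[THEN abs_le_D1, of I "transpose X ** X"]
      by (smt (verit) mult_left_mono norm_ge_zero)
  qed
  then show ?thesis
    unfolding bounded_iff by blast
qed

lemma compact_StEps: "compact (StEps \<epsilon> :: (real^'p^'n) set)"
proof -
  have "continuous_on UNIV (\<lambda>X::real^'p^'n. norm (transpose X ** X - mat 1))"
    by (intro continuous_intros matrix_mult.continuous_on continuous_on_transpose)
  then have "closed (StEps \<epsilon> :: (real^'p^'n) set)"
    unfolding StEps_def by (intro closed_Collect_le) auto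
  then show ?thesis
    by (simp add: compact_eq_bounded_closed bounded_StEps)
qed

lemma norm_le_SUP_StEps:
  fixes F :: "real^'p^'n \<Rightarrow> 'b::real_normed_vector"
  assumes "continuous_on (StEps \<epsilon>) F" and "Y \<in> StEps \<epsilon>"
  shows "norm (F Y) \<le> (SUP Z\<in>StEps \<epsilon>. norm (F Z))"
proof (rule cSUP_upper[OF \<open>Y \<in> StEps \<epsilon>\<close>])
  have "compact ((\<lambda>Z. norm (F Z)) ` StEps \<epsilon>)"
    by (intro compact_continuous_image continuous_on_norm assms compact_StEps)
  then show "bdd_above ((\<lambda>Z. norm (F Z)) ` StEps \<epsilon>)"
    by (intro bounded_imp_bdd_above compact_imp_bounded)
qed

section \<open>Convergence of the landing iteration\<close>

lemma sum_atLeastAtMost_le_sum_lessThan_add: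
  fixes a b :: "nat \<Rightarrow> 'a::ordered_comm_monoid_add"
  assumes "\<And>k. 0 \<le> a k" "\<And>k. 0 \<le> b k"
  shows "(\<Sum>k=1..K. a k) \<le> (\<Sum>k<Suc K. a k + b k)"
proof -
  have "(\<Sum>k=1..K. a k) \<le> (\<Sum>k<Suc K. a k)"
    using assms by (intro sum_mono2) auto
  also have "\<dots> \<le> (\<Sum>k<Suc K. a k + b k)"
    using assms by (intro sum_mono) (simp add: add_increasing2)
  finally show ?thesis .
qed

locale landing_method =
  fixes f :: "real^'p^'n \<Rightarrow> real"
    and G :: "real^'p^'n \<Rightarrow> real^'p^'n"
    and DG :: "real^'p^'n \<Rightarrow> ((real^'p^'n) \<Rightarrow>\<^sub>L (real^'p^'n))"
    and GL :: "real^'p^'n \<Rightarrow> real^'p^'n"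
    and lam \<epsilon> L \<mu> Lg \<eta> :: real
  assumes lam: "lam > 0"
    and eps: "0 < \<epsilon>" "\<epsilon> < 3/4"
    and f_grad: "\<And>Y. (f has_derivative (\<lambda>H. G Y \<bullet> H)) (at Y)"
    and G_deriv: "\<And>Y. (G has_derivative blinfun_apply (DG Y)) (at Y)"
    and L_pos: "L > 0"
    and L_lip: "\<And>Y Z. Y \<in> StEps \<epsilon> \<Longrightarrow> Z \<in> StEps \<epsilon> \<Longrightarrow> norm (G Y - G Z) \<le> L * norm (Y - Z)"
    and mu: "\<mu> \<ge> 2 / (3 - 4 * \<epsilon>) *
               (L * (1 - \<epsilon>) + 3 * (SUP Y\<in>StEps \<epsilon>. norm (msym (transpose Y ** G Y)))
                + (max L (SUP Y\<in>StEps \<epsilon>. norm (G Y)))^2 * (1 + \<epsilon>)^2 / (lam * (1 - \<epsilon>)))"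
    and GL_grad: "\<And>Y. (merit f G \<mu> has_derivative (\<lambda>H. GL Y \<bullet> H)) (at Y)"
    and Lg_pos: "Lg > 0"
    and Lg_lip: "\<And>Y Z. Y \<in> StEps \<epsilon> \<Longrightarrow> Z \<in> StEps \<epsilon> \<Longrightarrow> norm (GL Y - GL Z) \<le> Lg * norm (Y - Z)"
    and eta_pos: "\<eta> > 0"
    and eta_le: "\<eta> \<le> min (1 / (2 * Lg))
                  (min ((lam * \<mu>) / (4 * lam^2 * Lg * (1 + \<epsilon>)))
                       (eta_star (SUP Y\<in>StEps \<epsilon>. norm (rgrad G Y)) \<epsilon> lam))"
begin

lemma continuous_on_G: "continuous_on S G"
  using G_deriv by (intro continuous_at_imp_continuous_on ballI has_derivative_continuous) blast

lemma norm_G_le_SUP: "Y \<in> StEps \<epsilon> \<Longrightarrow> norm (G Y) \<le> (SUP Z\<in>StEps \<epsilon>. norm (G Z))"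
  by (intro norm_le_SUP_StEps continuous_on_G)

lemma norm_msym_le_SUP:
  "Y \<in> StEps \<epsilon> \<Longrightarrow> norm (msym (transpose Y ** G Y)) \<le> (SUP Z\<in>StEps \<epsilon>. norm (msym (transpose Z ** G Z)))"
  by (intro norm_le_SUP_StEps continuous_intros matrix_mult.continuous_on continuous_on_G)

lemma norm_rgrad_le_SUP: "Y \<in> StEps \<epsilon> \<Longrightarrow> norm (rgrad G Y) \<le> (SUP Z\<in>StEps \<epsilon>. norm (rgrad G Z))"
  unfolding rgrad_def
  by (intro norm_le_SUP_StEps continuous_intros matrix_mult.continuous_on continuous_on_G)

lemma mu_pos:
  assumes "StEps \<epsilon> \<noteq> ({} :: (real^'p^'n) set)"
  shows "0 < \<mu>"
proof -
  obtain Y :: "real^'p^'n" where "Y \<in> StEps \<epsilon>"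
    using assms by blast
  then have "0 \<le> (SUP Z\<in>StEps \<epsilon>. norm (msym (transpose Z ** G Z)))"
    using norm_msym_le_SUP norm_ge_zero order_trans by blast
  moreover have "0 < L * (1 - \<epsilon>)" "0 < 2 / (3 - 4 * \<epsilon>)"
    using L_pos eps by auto
  moreover have "0 \<le> (max L (SUP Y\<in>StEps \<epsilon>. norm (G Y)))\<^sup>2 * (1 + \<epsilon>)\<^sup>2 / (lam * (1 - \<epsilon>))"
    using lam eps by simp
  ultimately show ?thesis
    using mu by (smt (verit) mult_pos_pos)
qed

lemma eta_bounds:
  "\<eta> * lam \<le> 1/2" "Lg * \<eta> \<le> 1/2" "4 * lam\<^sup>2 * Lg * (1 + \<epsilon>) * \<eta> \<le> lam * \<mu>"
  "\<eta> \<le> eta_star (SUP Y\<in>StEps \<epsilon>. norm (rgrad G Y)) \<epsilon> lam"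
proof -
  have "\<eta> \<le> 1 / (2 * lam)"
    using eta_le eta_star_le_inverse[of _ \<epsilon> lam] by (meson min.boundedE order_trans)
  then show "\<eta> * lam \<le> 1/2"
    using lam by (simp add: field_simps)
  show "Lg * \<eta> \<le> 1/2"
    using eta_le Lg_pos by (simp add: field_simps)
  have "0 < 4 * lam\<^sup>2 * Lg * (1 + \<epsilon>)"
    using lam Lg_pos eps by simp
  then show "4 * lam\<^sup>2 * Lg * (1 + \<epsilon>) * \<eta> \<le> lam * \<mu>"
    using eta_le by (simp add: pos_le_divide_eq mult.commute)
  show "\<eta> \<le> eta_star (SUP Y\<in>StEps \<epsilon>. norm (rgrad G Y)) \<epsilon> lam"
    using eta_le by simp
qed

lemma landing_step_in_StEps:
  assumes Y: "Y \<in> StEps \<epsilon>" and t: "0 \<le> t" "t \<le> \<eta>"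
  shows "Y - t *\<^sub>R Lambda_field G lam Y \<in> StEps \<epsilon>"
proof -
  define D where "D = transpose Y ** Y - mat 1"
  define K where "K = mskew (G Y ** transpose Y)"
  have D: "norm D \<le> \<epsilon>"
    using Y by (simp add: StEps_def D_def)
  have "t * lam \<le> 1/2"
    using t eta_bounds(1) lam by (smt (verit) mult_right_mono)
  moreover have "t \<le> safeguard_ratio lam \<epsilon> (norm (K ** Y)) (norm D)" if "K ** Y \<noteq> 0"
  proof -
    have "norm (K ** Y) \<le> (SUP Z\<in>StEps \<epsilon>. norm (rgrad G Z))"
      using norm_rgrad_le_SUP[OF Y] by (simp add: rgrad_def K_def)
    then have "eta_star (SUP Z\<in>StEps \<epsilon>. norm (rgrad G Z)) \<epsilon> lam \<le> safeguard_ratio lam \<epsilon> (norm (K ** Y)) (norm D)"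
      using that D eps lam by (intro eta_star_le_safeguard_ratio) auto
    then show ?thesis
      using t eta_bounds(4) by linarith
  qed
  ultimately have "norm (transpose (Y - t *\<^sub>R (K ** Y + lam *\<^sub>R (Y ** D))) ** (Y - t *\<^sub>R (K ** Y + lam *\<^sub>R (Y ** D))) - mat 1) \<le> \<epsilon>"
    using eps lam t D by (intro norm_Gram_defect_landing_step_le[where D = D])
      (auto simp: D_def K_def transpose_mskew)
  then show ?thesis
    by (simp add: StEps_def Lambda_field_def rgrad_def K_def D_def)
qed

lemma merit_gradient_landing_lower_bound:
  assumes Y: "Y \<in> StEps \<epsilon>"
  shows "(norm (rgrad G Y))\<^sup>2 / 2 + lam * \<mu> * Ncons Y \<le> GL Y \<bullet> Lambda_field G lam Y"
proof -
  define D where "D = transpose Y ** Y - mat 1"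
  define A where "A = mskew (G Y ** transpose Y)"
  define \<Lambda> where "\<Lambda> = A ** Y + lam *\<^sub>R (Y ** D)"
  have gram: "transpose Y ** Y = D + mat 1"
    by (simp add: D_def)
  have \<Lambda>: "Lambda_field G lam Y = \<Lambda>"
    by (simp add: Lambda_field_def rgrad_def \<Lambda>_def A_def D_def)
  have "norm (DG Y (- \<Lambda>)) \<le> L * norm (- \<Lambda>)"
  proof (rule norm_derivative_le_of_segment_lipschitz[OF G_deriv eta_pos])
    fix t :: real
    assume "0 < t" "t \<le> \<eta>"
    then show "norm (G (Y + t *\<^sub>R - \<Lambda>) - G Y) \<le> L * (t * norm (- \<Lambda>))"
      using L_lip[OF landing_step_in_StEps[OF Y] Y, of t] by (simp add: \<Lambda>)
  qed
  then have DG: "norm (DG Y \<Lambda>) \<le> L * norm \<Lambda>"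
    by (simp add: blinfun.minus_right)
  have deriv: "(\<lambda>H. GL Y \<bullet> H) = (\<lambda>H. G Y \<bullet> H
      - 1/2 * (msym (transpose H ** G Y + transpose Y ** DG Y H) \<bullet> D
               + msym (transpose Y ** G Y) \<bullet> (transpose H ** Y + transpose Y ** H))
      + \<mu> * (1/2 * (D \<bullet> (transpose H ** Y + transpose Y ** H))))"
    unfolding D_def by (rule has_derivative_unique[OF GL_grad merit_has_derivative[OF f_grad G_deriv]])
  have "GL Y \<bullet> \<Lambda> = G Y \<bullet> \<Lambda>
      - 1/2 * (msym (transpose \<Lambda> ** G Y + transpose Y ** DG Y \<Lambda>) \<bullet> D
               + msym (transpose Y ** G Y) \<bullet> (transpose \<Lambda> ** Y + transpose Y ** \<Lambda>))
      + \<mu> * (1/2 * (D \<bullet> (transpose \<Lambda> ** Y + transpose Y ** \<Lambda>)))"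
    using fun_cong[OF deriv, of \<Lambda>] by simp
  also have "\<dots> = (norm A)\<^sup>2 - 3/2 * lam * (msym (transpose Y ** G Y) \<bullet> (D ** D))
       - 1/2 * ((A ** Y) \<bullet> (G Y ** D)) - 1/2 * (DG Y \<Lambda> \<bullet> (Y ** D)) + \<mu> * lam * (norm (Y ** D))\<^sup>2"
    unfolding \<Lambda>_def A_def by (rule merit_derivative_landing_direction_eq[OF gram])
  also have "(norm (A ** Y))\<^sup>2 / 2 + lam * \<mu> * (norm D)\<^sup>2 / 4 \<le> \<dots>"
    unfolding A_def using Y DG
    by (intro landing_direction_terms_lower_bound[OF gram _ eps lam L_pos norm_G_le_SUP[OF Y]
          norm_msym_le_SUP[OF Y] _ mu]) (simp_all add: StEps_def D_def \<Lambda>_def A_def)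
  finally show ?thesis
    by (simp add: \<Lambda> Ncons_def D_def rgrad_def A_def)
qed

lemma norm_Lambda_field_sq_le:
  assumes Y: "Y \<in> StEps \<epsilon>"
  shows "(norm (Lambda_field G lam Y))\<^sup>2 \<le> (norm (rgrad G Y))\<^sup>2 + 4 * lam\<^sup>2 * (1 + \<epsilon>) * Ncons Y"
proof -
  define D where "D = transpose Y ** Y - mat 1"
  have gram: "transpose Y ** Y = D + mat 1"
    by (simp add: D_def)
  have "(norm (Y ** D))\<^sup>2 \<le> (1 + \<epsilon>) * (norm D)\<^sup>2"
    using norm_mult_Gram_defect_bounds(2)[OF gram] Y
    by (smt (verit) StEps_def D_def mem_Collect_eq mult_right_mono zero_le_power2)
  then have "lam\<^sup>2 * (norm (Y ** D))\<^sup>2 \<le> 4 * lam\<^sup>2 * (1 + \<epsilon>) * Ncons Y"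
    by (simp add: Ncons_def D_def mult_left_mono)
  moreover have "(norm (Lambda_field G lam Y))\<^sup>2 = (norm (rgrad G Y))\<^sup>2 + lam\<^sup>2 * (norm (Y ** D))\<^sup>2"
    unfolding Lambda_field_def rgrad_def D_def
    by (rule norm_skew_plus_normal_sq[OF transpose_mskew symmetric_Gram_defect]) simp
  ultimately show ?thesis
    by simp
qed

lemma merit_landing_step_decrease:
  assumes Y: "Y \<in> StEps \<epsilon>"
  shows "merit f G \<mu> (Y - \<eta> *\<^sub>R Lambda_field G lam Y)
    \<le> merit f G \<mu> Y - (\<eta> / 4 * (norm (rgrad G Y))\<^sup>2 + \<eta> * lam * \<mu> / 2 * Ncons Y)"
proof -
  define a2 N where "a2 = (norm (rgrad G Y))\<^sup>2" and "N = Ncons Y"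
  have "0 \<le> a2" "0 \<le> N"
    by (simp_all add: a2_def N_def Ncons_def)
  have "merit f G \<mu> (Y - \<eta> *\<^sub>R Lambda_field G lam Y) \<le> merit f G \<mu> Y
      - \<eta> * (GL Y \<bullet> Lambda_field G lam Y) + Lg / 2 * \<eta>\<^sup>2 * (norm (Lambda_field G lam Y))\<^sup>2"
    using Lg_lip[OF Y landing_step_in_StEps[OF Y]] eta_pos
    by (intro descent_lemma[OF GL_grad]) auto
  moreover have "\<eta> * (a2 / 2 + lam * \<mu> * N) \<le> \<eta> * (GL Y \<bullet> Lambda_field G lam Y)"
    using merit_gradient_landing_lower_bound[OF Y] eta_pos by (simp add: a2_def N_def)
  moreover have "Lg / 2 * \<eta>\<^sup>2 * (norm (Lambda_field G lam Y))\<^sup>2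
      \<le> (Lg * \<eta>) * (\<eta> / 2 * a2) + (4 * lam\<^sup>2 * Lg * (1 + \<epsilon>) * \<eta>) * (\<eta> / 2 * N)"
    using mult_left_mono[OF norm_Lambda_field_sq_le[OF Y], of "Lg / 2 * \<eta>\<^sup>2"] Lg_pos
    by (simp add: a2_def N_def power2_eq_square algebra_simps)
  moreover have "(Lg * \<eta>) * (\<eta> / 2 * a2) \<le> 1/2 * (\<eta> / 2 * a2)"
    using eta_bounds(2) eta_pos \<open>0 \<le> a2\<close> by (intro mult_right_mono) auto
  moreover have "(4 * lam\<^sup>2 * Lg * (1 + \<epsilon>) * \<eta>) * (\<eta> / 2 * N) \<le> (lam * \<mu>) * (\<eta> / 2 * N)"
    using eta_bounds(3) eta_pos \<open>0 \<le> N\<close> by (intro mult_right_mono) auto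
  ultimately show ?thesis
    by (simp add: a2_def N_def algebra_simps)
qed

lemma landing_iterates_merit_bound:
  fixes X :: "nat \<Rightarrow> real^'p^'n"
  assumes X0: "X 0 \<in> StEps \<epsilon>" and iter: "\<And>k. X (Suc k) = X k - \<eta> *\<^sub>R Lambda_field G lam (X k)"
    and Lstar: "\<And>Y. Y \<in> StEps \<epsilon> \<Longrightarrow> Lstar \<le> merit f G \<mu> Y"
  shows "(\<Sum>k<n. \<eta> / 4 * (norm (rgrad G (X k)))\<^sup>2 + \<eta> * lam * \<mu> / 2 * Ncons (X k))
    \<le> merit f G \<mu> (X 0) - Lstar"
proof -
  have in_StEps: "X k \<in> StEps \<epsilon>" for k
    by (induction k) (simp_all add: X0 iter landing_step_in_StEps eta_pos less_imp_le)
  have "(\<Sum>k<n. \<eta> / 4 * (norm (rgrad G (X k)))\<^sup>2 + \<eta> * lam * \<mu> / 2 * Ncons (X k))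
      \<le> (\<Sum>k<n. merit f G \<mu> (X k) - merit f G \<mu> (X (Suc k)))"
    using merit_landing_step_decrease[OF in_StEps] by (intro sum_mono) (simp add: iter algebra_simps)
  also have "\<dots> = merit f G \<mu> (X 0) - merit f G \<mu> (X n)"
    by (rule sum_lessThan_telescope')
  also have "\<dots> \<le> merit f G \<mu> (X 0) - Lstar"
    using Lstar[OF in_StEps] by simp
  finally show ?thesis .
qed

end

theorem proposition9:
  fixes f :: "real^'p^'n \<Rightarrow> real"
    and G :: "real^'p^'n \<Rightarrow> real^'p^'n"
    and DG :: "real^'p^'n \<Rightarrow> ((real^'p^'n) \<Rightarrow>\<^sub>L (real^'p^'n))"
    and GL :: "real^'p^'n \<Rightarrow> real^'p^'n"
    and X :: "nat \<Rightarrow> real^'p^'n"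
    and lam \<epsilon> L \<mu> Lg Lstar \<eta> :: real
    and K :: nat
  assumes np: "CARD('p) \<le> CARD('n)"
    and lam: "lam > 0"
    and eps: "0 < \<epsilon>" "\<epsilon> < 3/4"
    and f_grad: "\<And>Y. (f has_derivative (\<lambda>H. G Y \<bullet> H)) (at Y)"
    and G_deriv: "\<And>Y. (G has_derivative blinfun_apply (DG Y)) (at Y)"
    and DG_cont: "continuous_on UNIV DG"
    and L_pos: "L > 0"
    and L_lip: "\<And>Y Z. Y \<in> StEps \<epsilon> \<Longrightarrow> Z \<in> StEps \<epsilon> \<Longrightarrow> norm (G Y - G Z) \<le> L * norm (Y - Z)"
    and mu: "\<mu> \<ge> 2 / (3 - 4 * \<epsilon>) *
               (L * (1 - \<epsilon>) + 3 * (SUP Y\<in>StEps \<epsilon>. norm (msym (transpose Y ** G Y)))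
                + (max L (SUP Y\<in>StEps \<epsilon>. norm (G Y)))^2 * (1 + \<epsilon>)^2 / (lam * (1 - \<epsilon>)))"
    and GL_grad: "\<And>Y. (merit f G \<mu> has_derivative (\<lambda>H. GL Y \<bullet> H)) (at Y)"
    and Lg_pos: "Lg > 0"
    and Lg_lip: "\<And>Y Z. Y \<in> StEps \<epsilon> \<Longrightarrow> Z \<in> StEps \<epsilon> \<Longrightarrow> norm (GL Y - GL Z) \<le> Lg * norm (Y - Z)"
    and Lstar: "\<And>Y. Y \<in> StEps \<epsilon> \<Longrightarrow> Lstar \<le> merit f G \<mu> Y"
    and X0: "X 0 \<in> StEps \<epsilon>"
    and iter: "\<And>k. X (Suc k) = X k - \<eta> *\<^sub>R Lambda_field G lam (X k)"
    and eta_pos: "\<eta> > 0"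
    and eta_le: "\<eta> \<le> min (1 / (2 * Lg))
                  (min ((lam * \<mu>) / (4 * lam^2 * Lg * (1 + \<epsilon>)))
                       (eta_star (SUP Y\<in>StEps \<epsilon>. norm (rgrad G Y)) \<epsilon> lam))"
    and K: "K \<ge> 1"
  shows "(1 / real K) * (\<Sum>k=1..K. (norm (rgrad G (X k)))^2)
           \<le> 4 * (merit f G \<mu> (X 0) - Lstar) / (\<eta> * real K)
         \<and> (1 / real K) * (\<Sum>k=1..K. Ncons (X k))
           \<le> 2 * (merit f G \<mu> (X 0) - Lstar) / (\<eta> * (lam * \<mu>) * real K)"
proof -
  interpret landing_method f G DG GL lam \<epsilon> L \<mu> Lg \<eta>
    by unfold_locales (fact assms)+
  have "0 < \<mu>"
    using mu_pos X0 by blast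
  let ?u = "\<lambda>k. \<eta> / 4 * (norm (rgrad G (X k)))\<^sup>2" and ?v = "\<lambda>k. \<eta> * lam * \<mu> / 2 * Ncons (X k)"
  have "0 \<le> ?u k" "0 \<le> ?v k" for k
    using eta_pos lam \<open>0 < \<mu>\<close> by (simp_all add: Ncons_def)
  moreover have "(\<Sum>k<Suc K. ?u k + ?v k) \<le> merit f G \<mu> (X 0) - Lstar"
    by (rule landing_iterates_merit_bound[OF X0 iter Lstar])
  ultimately have "\<eta> / 4 * (\<Sum>k=1..K. (norm (rgrad G (X k)))\<^sup>2) \<le> merit f G \<mu> (X 0) - Lstar"
    "\<eta> * lam * \<mu> / 2 * (\<Sum>k=1..K. Ncons (X k)) \<le> merit f G \<mu> (X 0) - Lstar"
    using sum_atLeastAtMost_le_sum_lessThan_add[of ?u ?v K]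
      sum_atLeastAtMost_le_sum_lessThan_add[of ?v ?u K] by (simp_all add: add.commute sum_distrib_left)
  then show ?thesis
    using K eta_pos lam \<open>0 < \<mu>\<close> by (simp add: field_simps)
qed

end
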